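(* Consider the system $\dot x=f(x)+Bw$, $z=Cx$ with the standing assumptions below, and a finite set of matrices $\mathcal A=\{A_1,\dots,A_k\}\subset\mathbb{R}^{n\times n}$ such that $\partial f(x)\in\operatorname{conv}\mathcal A$ for all $x\in\mathbb{R}^n$. Suppose $\eta_w,\eta_z\in\mathbb{R}$, $V\in\mathbb{R}^{n\times m}$, $P\in\mathbb{R}^{m\times 2n_w}$, and $M_1,\dots,M_k\in\mathbb{R}^{m\times m}$ satisfy (i) $P\ge 0$, $[B,\,-B]=VP$, $\eta_w\mathbf 1^T=\mathbf 1^TP$; (ii) $\eta_z>0$ and, for every $i\in\{1,\dots,k\}$: all off-diagonal entries of $M_i$ are nonnegative, $A_iV=VM_i$, and $-\eta_z\hat z_V=\mathbf 1^TM_i$, where $\hat z_V=[\,|CV_1|_1,\dots,|CV_m|_1\,]$ is the row vector whose $j$-th entry is the 1-norm of $C$ times the $j$-th column $V_j$ of $V$; and suppose the convex hull of the columns of $V$ is compact with $0$ in its interior. Let $\psi=\psi_{\mathcal V}/\eta_z$ and $\gamma_1=\eta_w/\eta_z$. Then for all $x_1,x_2\in\mathbb{R}^n$ and $w_1,w_2\in\mathbb{R}^{n_w}$, $$D^+\psi\big(x_1-x_2;\ f(x_1)-f(x_2)+B(w_1-w_2)\big)\le -|C(x_1-x_2)|_1+\gamma_1|w_1-w_2|_1,$$ and consequently the incremental $\mathcal L_1$ gain of the system is at most $\eta_w/\eta_z$: for any two inputs $w_1,w_2$ with $w_1-w_2\in\mathcal L_1$, the corresponding outputs (from $x_1(0)=x_2(0)=0$)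 satisfy $\|z_1-z_2\|_1\le (\eta_w/\eta_z)\|w_1-w_2\|_1$.
   Context: Standing assumptions: $f:\mathbb{R}^n\to\mathbb{R}^n$ is continuously differentiable with Jacobian $\partial f(x)$; $B\in\mathbb{R}^{n\times n_w}$, $C\in\mathbb{R}^{n_z\times n}$; every input signal $w$ yields a solution defined for all $t\ge0$ with $x(0)=0$, and $z=Cx$. $\operatorname{conv}\mathcal A=\{\sum_i\lambda_iA_i:\lambda_i\ge0,\sum_i\lambda_i=1\}$. $\mathbf 1$ is the all-ones vector; inequalities on matrices/vectors are entrywise. $|v|_1=\sum_i|v_i|$; $\|w\|_1=\int_0^\infty|w(t)|_1dt$, and $w\in\mathcal L_1$ iff $\|w\|_1<\infty$. The polyhedral gauge function is $\psi_{\mathcal V}(x)=\min_{p}\{\mathbf 1^Tp : x=Vp,\ p\ge0\}=\max_h\{h^Tx: h^TV\le\mathbf 1^T\}$. For a convex function $\psi$, $D^+\psi(x;v)=\lim_{h\downarrow0}(\psi(x+hv)-\psi(x))/h$ is its directional derivative at $x$ in direction $v$. *)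

theory Defs
  imports "HOL-Analysis.Analysis"
begin

definition l1norm :: "real ^ 'n \<Rightarrow> real" where
  "l1norm v = (\<Sum>i\<in>UNIV. \<bar>v $ i\<bar>)"

definition poly_gauge :: "real ^ 'm ^ 'n \<Rightarrow> real ^ 'n \<Rightarrow> real" where
  "poly_gauge V x = Inf {(\<Sum>i\<in>UNIV. p $ i) | p. (\<forall>i. 0 \<le> p $ i) \<and> V *v p = x}"

definition Dplus :: "(real ^ 'n \<Rightarrow> real) \<Rightarrow> real ^ 'n \<Rightarrow> real ^ 'n \<Rightarrow> real" where
  "Dplus psi x v = Lim (at_right 0) (\<lambda>h. (psi (x + h *\<^sub>R v) - psi x) / h)"

definition blockBmB :: "real ^ 'w ^ 'n \<Rightarrow> real ^ ('w + 'w) ^ 'n" where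
  "blockBmB B = (\<chi> i j. case j of Inl a \<Rightarrow> B $ i $ a | Inr a \<Rightarrow> - (B $ i $ a))"

text \<open>A (Caratheodory) solution of x' = f(x) + B w on [0,oo) with x(0) = 0:
  x(t) is the Lebesgue integral of f(x(s)) + B w(s) over [0,t] for every t >= 0.\<close>
definition is_solution ::
  "(real ^ 'n \<Rightarrow> real ^ 'n) \<Rightarrow> real ^ 'w ^ 'n \<Rightarrow> (real \<Rightarrow> real ^ 'w) \<Rightarrow> (real \<Rightarrow> real ^ 'n) \<Rightarrow> bool"
  where
  "is_solution f B w x \<longleftrightarrow> x 0 = 0 \<and>
     (\<forall>t\<ge>0. (\<lambda>s. f (x s) + B *v w s) absolutely_integrable_on {0..t} \<and>
             ((\<lambda>s. f (x s) + B *v w s) has_integral x t) {0..t})"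

end

theory Submission
  imports Defs
begin

text \<open>
  The scaled gauge \<open>\<psi> = \<psi>\<^sub>V / \<eta>\<^sub>z\<close> is sublinear, and the certificate makes it
  decrease along the incremental dynamics. By the mean value theorem, \<open>f x\<^sub>1 - f x\<^sub>2\<close>
  lies in the convex hull of the vectors \<open>A\<^sub>l (x\<^sub>1 - x\<^sub>2)\<close>. For each \<open>l\<close>, if
  \<open>p \<ge> 0\<close> represents \<open>x = V p\<close>, then \<open>A\<^sub>l V = V M\<^sub>l\<close> shows that \<open>p + h M\<^sub>l p\<close>
  represents the Euler step \<open>x + h A\<^sub>l x\<close>; it is nonnegative for small \<open>h\<close> because
  \<open>M\<^sub>l\<close> is Metzler, and the column sums of \<open>M\<^sub>l\<close> make its coefficient sum drop by at
  least \<open>h \<eta>\<^sub>z |C x|\<^sub>1\<close>. Likewise \<open>[B, -B] = V P\<close> gives \<open>\<psi>\<^sub>V (B y) \<le> \<eta>\<^sub>w |y|\<^sub>1\<close>.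
  Sublinearity turns these one-step estimates into the bound on \<open>D\<^sup>+\<psi>\<close> and, along two
  solutions, shows that \<open>\<psi>(x\<^sub>1 t - x\<^sub>2 t) + \<integral>\<^sub>0\<^sup>t |C(x\<^sub>1 - x\<^sub>2)|\<^sub>1 - \<gamma>\<^sub>1 \<integral>\<^sub>0\<^sup>t |w\<^sub>1 - w\<^sub>2|\<^sub>1\<close>
  has nonpositive upper right Dini derivative, hence is nonincreasing; since it starts at \<open>0\<close>
  and \<open>\<psi> \<ge> 0\<close>, letting \<open>t \<rightarrow> \<infinity>\<close> gives the gain bound.
\<close>

section \<open>Sublinear functions\<close>

definition sublinear :: "('a::real_vector \<Rightarrow> real) \<Rightarrow> bool" where
  "sublinear \<phi> \<longleftrightarrow> (\<forall>x y. \<phi> (x + y) \<le> \<phi> x + \<phi> y) \<and> (\<forall>a x. 0 \<le> a \<longrightarrow> \<phi> (a *\<^sub>R x) \<le> a * \<phi> x)"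

lemma sublinear_add_le: "sublinear \<phi> \<Longrightarrow> \<phi> (x + y) \<le> \<phi> x + \<phi> y"
  unfolding sublinear_def by blast

lemma sublinear_scaleR_le: "sublinear \<phi> \<Longrightarrow> 0 \<le> a \<Longrightarrow> \<phi> (a *\<^sub>R x) \<le> a * \<phi> x"
  unfolding sublinear_def by blast

lemma sublinear_divide:
  assumes "sublinear \<phi>" "0 < c"
  shows "sublinear (\<lambda>x. \<phi> x / c)"
  unfolding sublinear_def
proof (intro conjI allI impI)
  fix x y
  show "\<phi> (x + y) / c \<le> \<phi> x / c + \<phi> y / c"
    using sublinear_add_le[OF assms(1)] assms(2) by (simp add: divide_right_mono flip: add_divide_distrib)
next
  fix a :: real and x assume "0 \<le> a"
  then show "\<phi> (a *\<^sub>R x) / c \<le> a * (\<phi> x / c)"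
    using divide_right_mono[OF sublinear_scaleR_le[OF assms(1)] less_imp_le[OF assms(2)]] by simp
qed

lemma convex_on_sublinear: "sublinear \<phi> \<Longrightarrow> convex_on UNIV \<phi>"
  unfolding convex_on_def
  by (meson sublinear_add_le sublinear_scaleR_le add_mono order_trans convex_UNIV)

lemma continuous_on_sublinear:
  fixes \<phi> :: "'a::euclidean_space \<Rightarrow> real"
  shows "sublinear \<phi> \<Longrightarrow> continuous_on UNIV \<phi>"
  by (intro convex_on_continuous convex_on_sublinear) auto

lemma convex_on_compose_affine:
  assumes "convex_on UNIV g" "linear L"
  shows "convex_on UNIV (\<lambda>u. g (c + L u))"
  unfolding convex_on_def
proof (intro conjI ballI allI impI convex_UNIV)
  fix u v and a b :: real assume ab: "0 \<le> a" "0 \<le> b" "a + b = 1"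
  have "a *\<^sub>R (c + L u) + b *\<^sub>R (c + L v) = (a + b) *\<^sub>R c + L (a *\<^sub>R u + b *\<^sub>R v)"
    using assms(2) by (simp add: algebra_simps linear_add linear_scale)
  then have eq: "c + L (a *\<^sub>R u + b *\<^sub>R v) = a *\<^sub>R (c + L u) + b *\<^sub>R (c + L v)"
    using ab by simp
  show "g (c + L (a *\<^sub>R u + b *\<^sub>R v)) \<le> a * g (c + L u) + b * g (c + L v)"
    unfolding eq using assms(1) ab by (auto simp: convex_on_def)
qed

lemma Dplus_le_difference_quotient:
  fixes \<phi> :: "real ^ 'n \<Rightarrow> real"
  assumes "convex_on UNIV \<phi>" "0 < h"
  shows "Dplus \<phi> x v \<le> (\<phi> (x + h *\<^sub>R v) - \<phi> x) / h"
proof -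
  define g where "g t = \<phi> (x + t *\<^sub>R v)" for t :: real
  define q where "q t = (\<phi> (x + t *\<^sub>R v) - \<phi> x) / t" for t
  have g: "convex_on UNIV g"
    unfolding g_def by (intro convex_on_compose_affine assms linear_scaleR_left)
  have slope: "(g 0 - g t) / (0 - t) = q t" for t
    by (simp add: q_def g_def minus_divide_left)
  have mono: "q s \<le> q t" if "0 < s" "s \<le> t" for s t
  proof (cases "s = t")
    case False
    with that show ?thesis
      using convex_on_slope_le(1)[OF g, of 0 t s] by (simp only: slope) auto
  qed simp
  have bound: "g 0 - g (-1) \<le> q t" if "0 < t" for t
  proof -
    have "(g (-1) - g 0) / (-1 - 0) \<le> (g 0 - g t) / (0 - t)"
      using convex_on_slope_le[OF g, of "-1" t 0] that by (meson UNIV_I neg_less_0_iff_less order_trans zero_less_one)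
    then show ?thesis by (simp only: slope) simp
  qed
  have "(q \<longlongrightarrow> Inf (q ` ({0<..} \<inter> UNIV))) (at 0 within ({0<..} \<inter> UNIV))"
    using mono bound by (intro Lim_right_bound) auto
  moreover have "Dplus \<phi> x v = Lim (at_right 0) q"
    by (simp add: Dplus_def q_def[abs_def])
  ultimately have "Dplus \<phi> x v = Inf (q ` {0<..})"
    by (auto intro: tendsto_Lim)
  also have "\<dots> \<le> q h"
    using bound assms(2) by (intro cInf_lower bdd_belowI2[where m = "g 0 - g (-1)"]) auto
  finally show ?thesis by (simp add: q_def)
qed

lemma sublinear_Dplus_add_le:
  fixes \<phi> :: "real ^ 'n \<Rightarrow> real"
  assumes \<phi>: "sublinear \<phi>" and h: "0 < h"
    and decrease: "\<phi> (x + h *\<^sub>R u) \<le> \<phi> x - h * c" and d: "\<phi> d \<le> b"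
  shows "Dplus \<phi> x (u + d) \<le> b - c"
proof -
  have "\<phi> (x + h *\<^sub>R (u + d)) \<le> \<phi> (x + h *\<^sub>R u) + \<phi> (h *\<^sub>R d)"
    using sublinear_add_le[OF \<phi>, of "x + h *\<^sub>R u" "h *\<^sub>R d"] by (simp add: algebra_simps)
  moreover have "\<phi> (h *\<^sub>R d) \<le> h * b"
    using sublinear_scaleR_le[OF \<phi>, of h d] mult_left_mono[OF d, of h] h by linarith
  moreover have "(b - c) * h = h * b - h * c"
    by (simp add: algebra_simps)
  ultimately have "\<phi> (x + h *\<^sub>R (u + d)) - \<phi> x \<le> (b - c) * h"
    using decrease by linarith
  then have "(\<phi> (x + h *\<^sub>R (u + d)) - \<phi> x) / h \<le> b - c"
    using h by (simp add: pos_divide_le_eq)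
  then show ?thesis
    using Dplus_le_difference_quotient[OF convex_on_sublinear[OF \<phi>] h, of x "u + d"] by linarith
qed

lemma has_integral_mean_in_closed_convex:
  fixes g :: "real \<Rightarrow> 'a::euclidean_space"
  assumes S: "convex S" "closed S" and ab: "a < b" and I: "(g has_integral I) {a..b}"
    and gS: "\<And>s. s \<in> {a..b} \<Longrightarrow> g s \<in> S"
  shows "(1 / (b - a)) *\<^sub>R I \<in> S"
proof (rule ccontr)
  assume "(1 / (b - a)) *\<^sub>R I \<notin> S"
  then obtain c d where cd: "inner c ((1 / (b - a)) *\<^sub>R I) < d" "\<And>x. x \<in> S \<Longrightarrow> inner c x > d"
    using separating_hyperplane_closed_point[OF S] by blast
  have "((\<lambda>s. d) has_integral (b - a) * d) {a..b}"
    using has_integral_const_real[of d a b] ab by simp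
  moreover have "((\<lambda>s. inner c (g s)) has_integral inner c I) {a..b}"
    using has_integral_linear[OF I bounded_linear_inner_right[of c]] by (simp add: o_def)
  ultimately have "(b - a) * d \<le> inner c I"
    by (rule has_integral_le) (use cd(2) gS in \<open>auto intro: less_imp_le\<close>)
  then have "d \<le> inner c ((1 / (b - a)) *\<^sub>R I)"
    using ab by (simp add: field_simps)
  then show False
    using cd(1) by simp
qed

text \<open>The epigraph of a sublinear function is a closed convex cone, so it contains the mean
  value of \<open>(g, r)\<close>.\<close>

lemma sublinear_has_integral_le:
  fixes \<phi> :: "'a::euclidean_space \<Rightarrow> real" and g :: "real \<Rightarrow> 'a" and a b :: real
  assumes \<phi>: "sublinear \<phi>" and ab: "a < b"
    and g: "(g has_integral G) {a..b}" and r: "(r has_integral I) {a..b}"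
    and le: "\<And>s. s \<in> {a..b} \<Longrightarrow> \<phi> (g s) \<le> r s"
  shows "\<phi> G \<le> I"
proof -
  define Q where "Q = {z. \<phi> (fst z) \<le> snd z}"
  have "convex Q"
    unfolding convex_def Q_def
  proof (intro ballI allI impI, clarsimp)
    fix y1 r1 y2 r2 and u v :: real
    assume "\<phi> y1 \<le> r1" "\<phi> y2 \<le> r2" "0 \<le> u" "0 \<le> v"
    then show "\<phi> (u *\<^sub>R y1 + v *\<^sub>R y2) \<le> u * r1 + v * r2"
      using sublinear_add_le[OF \<phi>, of "u *\<^sub>R y1" "v *\<^sub>R y2"]
        sublinear_scaleR_le[OF \<phi>, of u y1] sublinear_scaleR_le[OF \<phi>, of v y2]
        mult_left_mono[of "\<phi> y1" r1 u] mult_left_mono[of "\<phi> y2" r2 v]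
      by linarith
  qed
  moreover have "continuous_on UNIV (\<lambda>z. \<phi> (fst z))"
    by (rule continuous_on_compose2[OF continuous_on_sublinear[OF \<phi>] continuous_on_fst[OF continuous_on_id]]) simp
  then have "closed Q"
    unfolding Q_def by (rule closed_Collect_le[OF _ continuous_on_snd[OF continuous_on_id]])
  moreover have "((\<lambda>s. (g s, r s)) has_integral (G, I)) {a..b}"
    using has_integral_add[OF has_integral_linear[OF g bounded_linear_Pair[OF bounded_linear_ident bounded_linear_zero]]
        has_integral_linear[OF r bounded_linear_Pair[OF bounded_linear_zero bounded_linear_ident]]]
    by (simp add: o_def)
  ultimately have "(1 / (b - a)) *\<^sub>R (G, I) \<in> Q"
    using ab le by (intro has_integral_mean_in_closed_convex) (auto simp: Q_def)
  then have "\<phi> ((1 / (b - a)) *\<^sub>R G) \<le> I / (b - a)"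
    by (simp add: Q_def)
  moreover have "\<phi> G \<le> (b - a) * \<phi> ((1 / (b - a)) *\<^sub>R G)"
    using sublinear_scaleR_le[OF \<phi>, of "b - a" "(1 / (b - a)) *\<^sub>R G"] ab by simp
  ultimately show ?thesis
    using ab by (simp add: field_simps)
qed

section \<open>Real analysis on intervals\<close>

lemma Dini_right_upper_nonpos_imp_le:
  fixes F :: "real \<Rightarrow> real"
  assumes ab: "a \<le> b" and cont: "continuous_on {a..b} F"
    and incr: "\<And>t \<epsilon>. a \<le> t \<Longrightarrow> t < b \<Longrightarrow> 0 < \<epsilon> \<Longrightarrow> \<forall>\<^sub>F h in at_right 0. F (t + h) - F t \<le> \<epsilon> * h"
  shows "F b \<le> F a"
proof (rule field_le_epsilon)
  fix e :: real assume e: "0 < e"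
  define \<epsilon> where "\<epsilon> = e / (b - a + 1)"
  have \<epsilon>: "0 < \<epsilon>"
    using e ab by (simp add: \<epsilon>_def)
  define S where "S = {a..b} \<inter> (\<lambda>s. F s - \<epsilon> * (s - a)) -` {..F a}"
  define s where "s = Sup S"
  have "closed S"
    unfolding S_def by (intro continuous_closed_preimage continuous_intros cont)
  moreover have "a \<in> S" "bdd_above S"
    using ab by (auto simp: S_def intro: bdd_aboveI[of _ b])
  ultimately have "s \<in> S"
    unfolding s_def using closed_contains_Sup by blast
  then have s: "a \<le> s" "s \<le> b" "F s \<le> F a + \<epsilon> * (s - a)"
    by (auto simp: S_def)
  have "s = b"
  proof (rule ccontr)
    assume "s \<noteq> b"
    with s obtain d where d: "0 < d" "\<And>h. 0 < h \<Longrightarrow> h < d \<Longrightarrow> F (s + h) - F s \<le> \<epsilon> * h"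
      using incr[OF s(1) _ \<epsilon>] by (fastforce simp: eventually_at_right_field)
    define h where "h = min (d / 2) (b - s)"
    have h: "0 < h" "h < d" "s + h \<le> b"
      using d s \<open>s \<noteq> b\<close> by (auto simp: h_def)
    then have "F (s + h) \<le> F a + \<epsilon> * (s + h - a)"
      using d(2)[OF h(1,2)] s(3) by (simp add: algebra_simps)
    then have "s + h \<in> S"
      using h s by (simp add: S_def)
    then have "s + h \<le> s"
      unfolding s_def using \<open>bdd_above S\<close> by (rule cSup_upper)
    then show False
      using h by simp
  qed
  then have "F b \<le> F a + \<epsilon> * (b - a)"
    using s(3) by simp
  also have "\<epsilon> * (b - a) \<le> e"
    using e ab by (simp add: \<epsilon>_def field_simps)
  finally show "F b \<le> F a + e"
    by simp
qed

lemma eventually_norm_integral_increment_le: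
  fixes g :: "real \<Rightarrow> 'a::banach"
  assumes cont: "continuous_on {t..b} g" and tb: "t < b" and \<epsilon>: "0 < \<epsilon>"
  shows "\<forall>\<^sub>F h in at_right 0. norm (integral {t..t+h} g - h *\<^sub>R g t) \<le> \<epsilon> * h"
proof -
  obtain d where d: "0 < d" "\<And>s. s \<in> {t..b} \<Longrightarrow> dist s t < d \<Longrightarrow> dist (g s) (g t) < \<epsilon>"
    using cont tb \<epsilon> unfolding continuous_on_iff by (meson atLeastAtMost_iff less_imp_le order_refl)
  show ?thesis
    unfolding eventually_at_right_field
  proof (intro exI[of _ "min d (b - t)"] conjI allI impI)
    show "0 < min d (b - t)"
      using d tb by simp
    fix h :: real assume h: "0 < h" "h < min d (b - t)"
    have "g integrable_on {t..t+h}"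
      using h by (intro integrable_continuous_real continuous_on_subset[OF cont]) auto
    moreover have "((\<lambda>s. g t) has_integral h *\<^sub>R g t) {t..t+h}"
      using has_integral_const_real[of "g t" t "t + h"] h by simp
    ultimately have diff: "((\<lambda>s. g s - g t) has_integral (integral {t..t+h} g - h *\<^sub>R g t)) (cbox t (t+h))"
      unfolding cbox_interval by (intro has_integral_diff integrable_integral)
    have bound: "norm (g s - g t) \<le> \<epsilon>" if "s \<in> cbox t (t+h)" for s
      using d(2)[of s] that h by (auto simp: cbox_interval dist_norm)
    show "norm (integral {t..t+h} g - h *\<^sub>R g t) \<le> \<epsilon> * h"
      using has_integral_bound[OF less_imp_le[OF \<epsilon>] diff bound] h by simp
  qed
qed

lemma nonneg_bounded_integral_atLeast:
  fixes g :: "real \<Rightarrow> real"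
  assumes int: "\<And>y. g integrable_on {a..y}" and nonneg: "\<And>y. a \<le> y \<Longrightarrow> 0 \<le> g y"
    and bound: "\<And>y. a \<le> y \<Longrightarrow> integral {a..y} g \<le> K"
  shows "g integrable_on {a..} \<and> integral {a..} g \<le> K"
proof -
  define I where "I y = integral {a..y} g" for y
  have mono: "mono I"
    unfolding I_def mono_def using int nonneg by (auto intro!: integral_subset_le)
  have IK: "I y \<le> K" for y
    using bound[of y] bound[of a] unfolding I_def by (cases "a \<le> y") auto
  have "(\<lambda>n. I (real n)) \<longlonglongrightarrow> (SUP n. I (real n))"
    using IK mono by (intro LIMSEQ_incseq_SUP) (auto intro: bdd_aboveI2[where M = K] simp: incseq_def mono_def)
  then have "(I \<longlongrightarrow> (SUP n. I (real n))) at_top"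
    by (rule tendsto_at_topI_sequentially_real[OF mono])
  then have "(g has_integral (SUP n. I (real n))) {a..}"
    unfolding I_def using int nonneg by (intro has_integral_to_inf)
  moreover have "(SUP n. I (real n)) \<le> K"
    using IK by (intro cSUP_least) auto
  ultimately show ?thesis
    by (auto simp: integral_unique)
qed

section \<open>The polyhedral gauge\<close>

definition cone_coeffs :: "real ^ 'm ^ 'n \<Rightarrow> real ^ 'n \<Rightarrow> (real ^ 'm) set" where
  "cone_coeffs V x = {p. (\<forall>i. 0 \<le> p $ i) \<and> V *v p = x}"

lemma poly_gauge_eq_Inf: "poly_gauge V x = Inf ((\<lambda>p. \<Sum>i\<in>UNIV. p $ i) ` cone_coeffs V x)"
  unfolding poly_gauge_def cone_coeffs_def by (rule arg_cong[where f = Inf]) auto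

lemma poly_gauge_le: "p \<in> cone_coeffs V x \<Longrightarrow> poly_gauge V x \<le> (\<Sum>i\<in>UNIV. p $ i)"
  unfolding poly_gauge_eq_Inf
  by (rule cInf_lower) (auto simp: cone_coeffs_def intro!: bdd_belowI2[where m = 0] sum_nonneg)

lemma poly_gauge_greatest:
  "cone_coeffs V x \<noteq> {} \<Longrightarrow> (\<And>p. p \<in> cone_coeffs V x \<Longrightarrow> c \<le> (\<Sum>i\<in>UNIV. p $ i)) \<Longrightarrow> c \<le> poly_gauge V x"
  unfolding poly_gauge_eq_Inf by (rule cInf_greatest) auto

lemma poly_gauge_nonneg: "cone_coeffs V x \<noteq> {} \<Longrightarrow> 0 \<le> poly_gauge V x"
  by (rule poly_gauge_greatest) (auto simp: cone_coeffs_def intro: sum_nonneg)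

lemma sublinear_poly_gauge:
  assumes spans: "\<And>x. cone_coeffs V x \<noteq> {}"
  shows "sublinear (poly_gauge V)"
  unfolding sublinear_def
proof (intro conjI allI impI)
  fix x y
  have "poly_gauge V (x + y) - (\<Sum>i\<in>UNIV. q $ i) \<le> poly_gauge V x" if q: "q \<in> cone_coeffs V y" for q
  proof (rule poly_gauge_greatest[OF spans])
    fix p assume "p \<in> cone_coeffs V x"
    with q have "p + q \<in> cone_coeffs V (x + y)"
      by (auto simp: cone_coeffs_def matrix_vector_right_distrib)
    then show "poly_gauge V (x + y) - (\<Sum>i\<in>UNIV. q $ i) \<le> (\<Sum>i\<in>UNIV. p $ i)"
      using poly_gauge_le by (fastforce simp: sum.distrib)
  qed
  then have "poly_gauge V (x + y) - poly_gauge V x \<le> poly_gauge V y"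
    by (intro poly_gauge_greatest[OF spans]) (simp add: algebra_simps)
  then show "poly_gauge V (x + y) \<le> poly_gauge V x + poly_gauge V y"
    by simp
next
  fix a :: real and x assume a: "0 \<le> a"
  show "poly_gauge V (a *\<^sub>R x) \<le> a * poly_gauge V x"
  proof (cases "a = 0")
    case True
    have "0 \<in> cone_coeffs V 0"
      by (simp add: cone_coeffs_def)
    then show ?thesis
      using True poly_gauge_le[of 0 V 0] by simp
  next
    case False
    with a have "poly_gauge V (a *\<^sub>R x) / a \<le> poly_gauge V x"
    proof (intro poly_gauge_greatest[OF spans])
      fix p assume "p \<in> cone_coeffs V x"
      with a have "a *\<^sub>R p \<in> cone_coeffs V (a *\<^sub>R x)"
        by (auto simp: cone_coeffs_def matrix_vector_mult_scaleR)
      then have "poly_gauge V (a *\<^sub>R x) \<le> a * (\<Sum>i\<in>UNIV. p $ i)"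
        using poly_gauge_le by (fastforce simp: sum_distrib_left)
      then show "poly_gauge V (a *\<^sub>R x) / a \<le> (\<Sum>i\<in>UNIV. p $ i)"
        using a False by (simp add: pos_divide_le_eq mult.commute)
    qed
    then show ?thesis
      using a False by (simp add: pos_divide_le_eq mult.commute)
  qed
qed

lemma convex_hull_columns_subset:
  fixes V :: "real ^ 'm ^ 'n"
  shows "convex hull (range (\<lambda>j. column j V)) \<subseteq> (\<lambda>p. V *v p) ` {p. (\<forall>i. 0 \<le> p $ i) \<and> (\<Sum>i\<in>UNIV. p $ i) = 1}"
proof (rule hull_minimal)
  show "range (\<lambda>j. column j V) \<subseteq> (\<lambda>p. V *v p) ` {p. (\<forall>i. 0 \<le> p $ i) \<and> (\<Sum>i\<in>UNIV. p $ i) = 1}"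
  proof clarify
    fix j
    have "column j V = V *v axis j 1"
      by (rule matrix_vector_mult_basis[symmetric])
    moreover have "\<forall>i. 0 \<le> axis j (1::real) $ i" "(\<Sum>i\<in>UNIV. axis j (1::real) $ i) = 1"
      by (simp_all add: axis_def)
    ultimately
    show "column j V \<in> (\<lambda>p. V *v p) ` {p. (\<forall>i. 0 \<le> p $ i) \<and> (\<Sum>i\<in>UNIV. p $ i) = 1}"
      by blast
  qed
  have "convex {p :: real ^ 'm. (\<forall>i. 0 \<le> p $ i) \<and> (\<Sum>i\<in>UNIV. p $ i) = 1}"
    unfolding convex_def by (auto simp: sum.distrib simp flip: sum_distrib_left)
  then show "convex ((\<lambda>p. V *v p) ` {p. (\<forall>i. 0 \<le> p $ i) \<and> (\<Sum>i\<in>UNIV. p $ i) = 1})"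
    by (rule convex_linear_image[OF matrix_vector_mul_linear])
qed

lemma cone_coeffs_norm_bound:
  fixes V :: "real ^ 'm ^ 'n"
  assumes "0 \<in> interior (convex hull (range (\<lambda>j. column j V)))"
  obtains L where "0 < L" "\<And>y. \<exists>p\<in>cone_coeffs V y. (\<Sum>i\<in>UNIV. p $ i) \<le> L * norm y"
proof -
  obtain r where r: "0 < r" "ball 0 r \<subseteq> convex hull (range (\<lambda>j. column j V))"
    using assms mem_interior by blast
  have "\<exists>p\<in>cone_coeffs V y. (\<Sum>i\<in>UNIV. p $ i) \<le> 2 / r * norm y" for y
  proof (cases "y = 0")
    case True
    then show ?thesis
      by (intro bexI[of _ 0]) (auto simp: cone_coeffs_def)
  next
    case False
    define c where "c = r / (2 * norm y)"
    have c: "0 < c" "norm (c *\<^sub>R y) < r"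
      using False r(1) by (simp_all add: c_def)
    then have "c *\<^sub>R y \<in> (\<lambda>p. V *v p) ` {p. (\<forall>i. 0 \<le> p $ i) \<and> (\<Sum>i\<in>UNIV. p $ i) = 1}"
      using r(2) convex_hull_columns_subset[of V] c(2) by (meson mem_ball_0 subsetD)
    then obtain p where p: "\<forall>i. 0 \<le> p $ i" "(\<Sum>i\<in>UNIV. p $ i) = 1" "V *v p = c *\<^sub>R y"
      by (auto simp: image_iff)
    have "(1 / c) *\<^sub>R p \<in> cone_coeffs V y"
      using p c by (simp add: cone_coeffs_def matrix_vector_mult_scaleR)
    moreover have "(\<Sum>i\<in>UNIV. ((1 / c) *\<^sub>R p) $ i) = 1 / c"
      using p(2) by (simp flip: sum_divide_distrib)
    moreover have "1 / c = 2 / r * norm y"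
      by (simp add: c_def)
    ultimately show ?thesis
      by (intro bexI[where x = "(1 / c) *\<^sub>R p"]) auto
  qed
  then show thesis
    using that[of "2 / r"] r(1) by simp
qed

lemma metzler_euler_nonneg:
  fixes M :: "real ^ 'm ^ 'm"
  assumes metzler: "\<And>i j. i \<noteq> j \<Longrightarrow> 0 \<le> M $ i $ j" and h: "0 \<le> h"
    and diag: "\<And>i. 0 \<le> 1 + h * M $ i $ i" and p: "\<And>i. 0 \<le> p $ i"
  shows "0 \<le> (p + h *\<^sub>R (M *v p)) $ i"
proof -
  have "0 \<le> (1 + h * M $ i $ i) * p $ i"
    using diag p by simp
  moreover have "0 \<le> h * (\<Sum>j\<in>UNIV - {i}. M $ i $ j * p $ j)"
    using metzler h p by (auto intro!: mult_nonneg_nonneg sum_nonneg)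
  ultimately have "0 \<le> (1 + h * M $ i $ i) * p $ i + h * (\<Sum>j\<in>UNIV - {i}. M $ i $ j * p $ j)"
    by simp
  also have "\<dots> = (p + h *\<^sub>R (M *v p)) $ i"
    by (simp add: matrix_vector_mult_def sum.remove[of UNIV i] algebra_simps)
  finally show ?thesis .
qed

lemma l1norm_matrix_vector_le:
  "l1norm (A *v p) \<le> (\<Sum>j\<in>UNIV. l1norm (column j A) * \<bar>p $ j\<bar>)"
proof -
  have "l1norm (A *v p) \<le> (\<Sum>k\<in>UNIV. \<Sum>j\<in>UNIV. \<bar>A $ k $ j\<bar> * \<bar>p $ j\<bar>)"
    unfolding l1norm_def matrix_vector_mult_def
    by (simp only: vec_lambda_beta) (intro sum_mono, rule order.trans[OF sum_abs], simp add: abs_mult)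
  also have "\<dots> = (\<Sum>j\<in>UNIV. l1norm (column j A) * \<bar>p $ j\<bar>)"
    by (subst sum.swap) (simp add: l1norm_def column_def sum_distrib_right)
  finally show ?thesis .
qed

lemma poly_gauge_euler_step:
  fixes V :: "real ^ 'm ^ 'n" and A :: "real ^ 'n ^ 'n" and M :: "real ^ 'm ^ 'm" and C :: "real ^ 'n ^ 'z"
  assumes spans: "\<And>x. cone_coeffs V x \<noteq> {}"
    and metzler: "\<And>i j. i \<noteq> j \<Longrightarrow> 0 \<le> M $ i $ j" and AV: "A ** V = V ** M"
    and colsum: "\<And>j. - \<eta> * l1norm (C *v column j V) = (\<Sum>i\<in>UNIV. M $ i $ j)"
    and \<eta>: "0 \<le> \<eta>" and h: "0 \<le> h" and diag: "\<And>i. 0 \<le> 1 + h * M $ i $ i"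
  shows "poly_gauge V (x + h *\<^sub>R (A *v x)) \<le> poly_gauge V x - h * \<eta> * l1norm (C *v x)"
proof -
  have "poly_gauge V (x + h *\<^sub>R (A *v x)) + h * \<eta> * l1norm (C *v x) \<le> poly_gauge V x"
  proof (rule poly_gauge_greatest[OF spans])
    fix p assume "p \<in> cone_coeffs V x"
    then have p: "\<And>i. 0 \<le> p $ i" "V *v p = x"
      by (auto simp: cone_coeffs_def)
    define q where "q = p + h *\<^sub>R (M *v p)"
    have "V *v q = x + h *\<^sub>R (A *v x)"
      by (simp add: q_def matrix_vector_right_distrib matrix_vector_mult_scaleR matrix_vector_mul_assoc
          flip: AV p(2))
    then have "q \<in> cone_coeffs V (x + h *\<^sub>R (A *v x))"
      using metzler_euler_nonneg[OF metzler h diag p(1)] by (simp add: cone_coeffs_def q_def)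
    then have "poly_gauge V (x + h *\<^sub>R (A *v x)) \<le> (\<Sum>i\<in>UNIV. q $ i)"
      by (rule poly_gauge_le)
    also have "(\<Sum>i\<in>UNIV. q $ i) = (\<Sum>i\<in>UNIV. p $ i) - h * \<eta> * (\<Sum>j\<in>UNIV. l1norm (C *v column j V) * p $ j)"
    proof -
      have "(\<Sum>i\<in>UNIV. (M *v p) $ i) = (\<Sum>j\<in>UNIV. (\<Sum>i\<in>UNIV. M $ i $ j) * p $ j)"
        unfolding matrix_vector_mult_def by (simp add: sum_distrib_right) (rule sum.swap)
      also have "\<dots> = - \<eta> * (\<Sum>j\<in>UNIV. l1norm (C *v column j V) * p $ j)"
        by (simp add: sum_distrib_left mult.assoc flip: colsum)
      moreover have "(\<Sum>i\<in>UNIV. q $ i) = (\<Sum>i\<in>UNIV. p $ i) + h * (\<Sum>i\<in>UNIV. (M *v p) $ i)"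
        by (simp add: q_def sum.distrib sum_distrib_left)
      ultimately show ?thesis
        by simp
    qed
    also have "h * \<eta> * l1norm (C *v x) \<le> h * \<eta> * (\<Sum>j\<in>UNIV. l1norm (C *v column j V) * p $ j)"
    proof -
      have "l1norm (C *v x) = l1norm ((C ** V) *v p)"
        by (simp add: matrix_vector_mul_assoc flip: p(2))
      also have "\<dots> \<le> (\<Sum>j\<in>UNIV. l1norm (C *v column j V) * p $ j)"
        using l1norm_matrix_vector_le[of "C ** V" p] p(1)
        by (simp add: column_def matrix_matrix_mult_def matrix_vector_mult_def)
      finally show ?thesis
        using h \<eta> by (simp add: mult_left_mono)
    qed
    ultimately show "poly_gauge V (x + h *\<^sub>R (A *v x)) + h * \<eta> * l1norm (C *v x) \<le> (\<Sum>i\<in>UNIV. p $ i)"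
      by linarith
  qed
  then show ?thesis
    by simp
qed

lemma sum_UNIV_Plus:
  "(\<Sum>j\<in>(UNIV :: ('a::finite + 'b::finite) set). g j) = (\<Sum>a\<in>UNIV. g (Inl a)) + (\<Sum>b\<in>UNIV. g (Inr b))"
  using sum.Plus[of "UNIV :: 'a set" "UNIV :: 'b set" g] by (simp add: o_def)

lemma poly_gauge_mult_le:
  fixes V :: "real ^ 'm ^ 'n" and B :: "real ^ 'w ^ 'n" and P :: "real ^ ('w + 'w) ^ 'm"
  assumes P_nonneg: "\<And>i j. 0 \<le> P $ i $ j" and BP: "blockBmB B = V ** P"
    and P_colsum: "\<And>j. \<eta> = (\<Sum>i\<in>UNIV. P $ i $ j)"
  shows "poly_gauge V (B *v y) \<le> \<eta> * l1norm y"
proof -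
  \<comment> \<open>Split \<open>y\<close> into positive and negative parts, so that \<open>B y = [B, -B] d\<close> with \<open>d \<ge> 0\<close>.\<close>
  define d :: "real ^ ('w + 'w)" where
    "d = (\<chi> j. case j of Inl a \<Rightarrow> max (y $ a) 0 | Inr a \<Rightarrow> max (- y $ a) 0)"
  have d_nonneg: "0 \<le> d $ j" for j
    by (cases j) (auto simp: d_def)
  have "(blockBmB B *v d) $ i = (B *v y) $ i" for i
  proof -
    have "(blockBmB B *v d) $ i
        = (\<Sum>a\<in>UNIV. B $ i $ a * max (y $ a) 0) + (\<Sum>a\<in>UNIV. - B $ i $ a * max (- y $ a) 0)"
      by (simp add: matrix_vector_mult_def sum_UNIV_Plus blockBmB_def d_def)
    also have "\<dots> = (\<Sum>a\<in>UNIV. B $ i $ a * y $ a)"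
      by (simp flip: sum.distrib) (rule sum.cong, auto simp: max_def algebra_simps)
    finally show ?thesis
      by (simp add: matrix_vector_mult_def)
  qed
  then have "V *v (P *v d) = B *v y"
    by (simp add: vec_eq_iff matrix_vector_mul_assoc flip: BP)
  then have "P *v d \<in> cone_coeffs V (B *v y)"
    using P_nonneg d_nonneg by (auto simp: cone_coeffs_def matrix_vector_mult_def intro!: sum_nonneg)
  then have "poly_gauge V (B *v y) \<le> (\<Sum>i\<in>UNIV. (P *v d) $ i)"
    by (rule poly_gauge_le)
  also have "\<dots> = (\<Sum>j\<in>UNIV. (\<Sum>i\<in>UNIV. P $ i $ j) * d $ j)"
    unfolding matrix_vector_mult_def by (simp add: sum_distrib_right) (rule sum.swap)
  also have "\<dots> = \<eta> * (\<Sum>j\<in>UNIV. d $ j)"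
    by (simp add: sum_distrib_left flip: P_colsum)
  also have "(\<Sum>j\<in>UNIV. d $ j) = l1norm y"
    by (simp add: sum_UNIV_Plus d_def l1norm_def flip: sum.distrib) (rule sum.cong, auto simp: max_def)
  finally show ?thesis .
qed

lemma mvt_convex_hull_image:
  fixes f :: "real ^ 'n \<Rightarrow> real ^ 'n" and S :: "(real ^ 'n ^ 'n) set"
  assumes f_deriv: "\<And>x. (f has_derivative (\<lambda>h. Jf x *v h)) (at x)"
    and Jf: "\<And>x. Jf x \<in> convex hull S" and S: "finite S"
  shows "f x1 - f x2 \<in> convex hull ((\<lambda>J. J *v (x1 - x2)) ` S)"
proof -
  define d where "d = x1 - x2"
  have lin: "linear (\<lambda>J :: real ^ 'n ^ 'n. J *v d)"
    by (rule linearI) (simp_all add: vec_eq_iff matrix_vector_mult_def sum.distrib sum_distrib_left algebra_simps)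
  have der: "((\<lambda>s. f (x2 + s *\<^sub>R d)) has_vector_derivative (Jf (x2 + s *\<^sub>R d) *v d)) (at s within {0..1})"
    for s :: real
  proof -
    have "((\<lambda>s. x2 + s *\<^sub>R d) has_derivative (\<lambda>t. t *\<^sub>R d)) (at s within {0..1})"
      by (auto intro!: derivative_eq_intros)
    from has_derivative_compose[OF this f_deriv] show ?thesis
      unfolding has_vector_derivative_def by (simp add: matrix_vector_mult_scaleR)
  qed
  have "((\<lambda>s. Jf (x2 + s *\<^sub>R d) *v d) has_integral (f x1 - f x2)) {0..1}"
    using fundamental_theorem_of_calculus[of 0 1, OF _ der] by (simp add: d_def)
  moreover have "Jf y *v d \<in> convex hull ((\<lambda>J. J *v d) ` S)" for y
    using Jf[of y] by (auto simp: convex_hull_linear_image[OF lin, symmetric])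
  moreover have "closed (convex hull ((\<lambda>J. J *v d) ` S))"
    using S by (intro compact_imp_closed compact_convex_hull finite_imp_compact) simp
  ultimately have "(1 / (1 - 0)) *\<^sub>R (f x1 - f x2) \<in> convex hull ((\<lambda>J. J *v d) ` S)"
    by (intro has_integral_mean_in_closed_convex) auto
  then show ?thesis
    by (simp add: d_def)
qed

lemma exists_one_plus_mult_nonneg:
  fixes c :: "'a::finite \<Rightarrow> real"
  obtains h0 where "0 < h0" "\<And>h k. 0 \<le> h \<Longrightarrow> h \<le> h0 \<Longrightarrow> 0 \<le> 1 + h * c k"
proof
  define S where "S = (\<Sum>k\<in>UNIV. \<bar>c k\<bar>)"
  have S: "0 \<le> S" "\<And>k. \<bar>c k\<bar> \<le> S"
    unfolding S_def by (auto intro: sum_nonneg member_le_sum)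
  then show "0 < 1 / (1 + S)"
    by simp
  fix h k assume h: "0 \<le> h" "h \<le> 1 / (1 + S)"
  have "h * \<bar>c k\<bar> \<le> 1 / (1 + S) * S"
    using h S by (intro mult_mono) auto
  also have "\<dots> \<le> 1"
    using S by (simp add: field_simps)
  finally show "0 \<le> 1 + h * c k"
    using h(1) abs_ge_minus_self[of "c k"] mult_left_mono[of "- c k" "\<bar>c k\<bar>" h] by linarith
qed

lemma poly_gauge_incremental_decrease:
  fixes f :: "real ^ 'n \<Rightarrow> real ^ 'n" and A :: "'k::finite \<Rightarrow> real ^ 'n ^ 'n"
    and V :: "real ^ 'm ^ 'n" and M :: "'k \<Rightarrow> real ^ 'm ^ 'm" and C :: "real ^ 'n ^ 'z"
  assumes spans: "\<And>x. cone_coeffs V x \<noteq> {}"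
    and f_deriv: "\<And>x. (f has_derivative (\<lambda>h. Jf x *v h)) (at x)"
    and Jf_conv: "\<And>x. Jf x \<in> convex hull (range A)"
    and metzler: "\<And>l i j. i \<noteq> j \<Longrightarrow> 0 \<le> M l $ i $ j" and AV: "\<And>l. A l ** V = V ** M l"
    and colsum: "\<And>l j. - \<eta> * l1norm (C *v column j V) = (\<Sum>i\<in>UNIV. M l $ i $ j)"
    and \<eta>: "0 \<le> \<eta>" and h: "0 \<le> h" and diag: "\<And>l i. 0 \<le> 1 + h * M l $ i $ i"
  shows "poly_gauge V (x1 - x2 + h *\<^sub>R (f x1 - f x2))
           \<le> poly_gauge V (x1 - x2) - h * \<eta> * l1norm (C *v (x1 - x2))"
proof -
  define e where "e = x1 - x2"
  have "f x1 - f x2 \<in> convex hull (range (\<lambda>l. A l *v e))"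
    using mvt_convex_hull_image[OF f_deriv Jf_conv, of x1 x2] by (simp add: e_def image_image)
  moreover have "convex_on UNIV (\<lambda>u. poly_gauge V (e + h *\<^sub>R u))"
    by (rule convex_on_compose_affine[OF convex_on_sublinear[OF sublinear_poly_gauge[OF spans]] linear_scaleR])
  then have "convex_on (convex hull (range (\<lambda>l. A l *v e))) (\<lambda>u. poly_gauge V (e + h *\<^sub>R u))"
    by (rule convex_on_subset) (auto intro: convex_convex_hull)
  moreover have "poly_gauge V (e + h *\<^sub>R (A l *v e)) \<le> poly_gauge V e - h * \<eta> * l1norm (C *v e)" for l
    by (rule poly_gauge_euler_step[OF spans metzler[where l = l] AV colsum[where l = l] \<eta> h diag[where l = l]])
  ultimately show ?thesis
    unfolding e_def using convex_on_convex_hull_bound by blast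
qed

section \<open>Solutions and incremental storage functions\<close>

lemma is_solution_has_integral:
  assumes sol: "is_solution f B w x" and ab: "0 \<le> a" "a \<le> b"
  shows "((\<lambda>s. f (x s) + B *v w s) has_integral (x b - x a)) {a..b}"
proof -
  let ?u = "\<lambda>s. f (x s) + B *v w s"
  have xa: "(?u has_integral x a) {0..a}" and xb: "(?u has_integral x b) {0..b}"
    using sol ab by (auto simp: is_solution_def)
  have "?u integrable_on {a..b}"
    using ab by (intro integrable_subinterval_real[OF has_integral_integrable[OF xb]]) auto
  then have I: "(?u has_integral integral {a..b} ?u) {a..b}"
    by (rule integrable_integral)
  have "(?u has_integral x a + integral {a..b} ?u) {0..b}"
    using ab by (intro has_integral_combine[OF _ _ xa I]) auto
  then have "x a + integral {a..b} ?u = x b"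
    using xb by (rule has_integral_unique)
  then have "integral {a..b} ?u = x b - x a"
    by (metis add_diff_cancel_left')
  then show ?thesis
    using I by simp
qed

lemma is_solution_continuous_on:
  assumes sol: "is_solution f B w x" and T: "0 \<le> T"
  shows "continuous_on {0..T} x"
proof -
  have "continuous_on {0..T} (\<lambda>t. integral {0..t} (\<lambda>s. f (x s) + B *v w s))"
    using is_solution_has_integral[OF sol order.refl T]
    by (intro indefinite_integral_continuous_1 has_integral_integrable)
  moreover have "integral {0..t} (\<lambda>s. f (x s) + B *v w s) = x t" if "t \<in> {0..T}" for t
    using is_solution_has_integral[OF sol, of 0 t] that sol by (simp add: is_solution_def integral_unique)
  ultimately show ?thesis
    by (rule continuous_on_eq)
qed

lemma continuous_on_l1norm: "continuous_on S l1norm"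
  unfolding l1norm_def by (intro continuous_intros)

lemma is_solution_output_continuous_on:
  fixes C :: "real ^ 'n ^ 'z"
  assumes sol1: "is_solution f B w1 x1" and sol2: "is_solution f B w2 x2" and T: "0 \<le> T"
  shows "continuous_on {0..T} (\<lambda>t. l1norm (C *v x1 t - C *v x2 t))"
proof -
  have "continuous_on {0..T} (\<lambda>t. C *v (x1 t - x2 t))"
    using is_solution_continuous_on[OF sol1 T] is_solution_continuous_on[OF sol2 T]
    by (intro continuous_on_compose2[OF linear_continuous_on[OF matrix_vector_mul_bounded_linear]]
        continuous_intros) auto
  then show ?thesis
    by (intro continuous_on_compose2[OF continuous_on_l1norm]) (auto simp: matrix_vector_mult_diff_distrib)
qed

locale incremental_storage =
  fixes \<phi> :: "real ^ 'n \<Rightarrow> real" and f :: "real ^ 'n \<Rightarrow> real ^ 'n"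
    and B :: "real ^ 'w ^ 'n" and C :: "real ^ 'n ^ 'z" and \<gamma> L h0 :: real
  assumes sublinear: "sublinear \<phi>"
    and nonneg: "\<And>x. 0 \<le> \<phi> x" and le_norm: "\<And>x. \<phi> x \<le> L * norm x"
    and h0: "0 < h0"
    and decrease: "\<And>x1 x2 h. 0 < h \<Longrightarrow> h \<le> h0 \<Longrightarrow>
      \<phi> (x1 - x2 + h *\<^sub>R (f x1 - f x2)) \<le> \<phi> (x1 - x2) - h * l1norm (C *v (x1 - x2))"
    and input: "\<And>w. \<phi> (B *v w) \<le> \<gamma> * l1norm w"
    and f_cont: "continuous_on UNIV f"
begin

lemma Dplus_le:
  "Dplus \<phi> (x1 - x2) (f x1 - f x2 + B *v (w1 - w2)) \<le> - l1norm (C *v (x1 - x2)) + \<gamma> * l1norm (w1 - w2)"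
  using sublinear_Dplus_add_le[OF sublinear h0 decrease[OF h0 order.refl] input] by simp

lemma L_nonneg: "0 \<le> L"
  using nonneg[of "axis undefined 1"] le_norm[of "axis undefined 1"] by simp

lemma gamma_nonneg: "0 \<le> \<gamma>"
  using nonneg[of "B *v axis undefined 1"] input[of "axis undefined 1"] by (simp add: l1norm_def axis_def)

lemma phi_0: "\<phi> 0 = 0"
  using sublinear_scaleR_le[OF sublinear, of 0 0] nonneg[of 0] by simp

lemma continuous_on_field_difference:
  assumes sol1: "is_solution f B w1 x1" and sol2: "is_solution f B w2 x2" and T: "0 \<le> T"
  shows "continuous_on {0..T} (\<lambda>s. f (x1 s) - f (x2 s))"
proof -
  have "continuous_on {0..T} (\<lambda>s. f (x1 s))" "continuous_on {0..T} (\<lambda>s. f (x2 s))"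
    using is_solution_continuous_on[OF sol1 T] is_solution_continuous_on[OF sol2 T]
      continuous_on_compose2[OF f_cont] by blast+
  then show ?thesis
    by (rule continuous_on_diff)
qed

lemma storage_step:
  fixes x1 x2 :: "real \<Rightarrow> real ^ 'n" and w1 w2 :: "real \<Rightarrow> real ^ 'w"
  assumes sol1: "is_solution f B w1 x1" and sol2: "is_solution f B w2 x2"
    and t: "0 \<le> t" and h: "0 < h" "h \<le> h0"
    and W: "(\<lambda>s. l1norm (w1 s - w2 s)) integrable_on {t..t+h}"
  shows "\<phi> (x1 (t+h) - x2 (t+h)) \<le> \<phi> (x1 t - x2 t) - h * l1norm (C *v (x1 t - x2 t))
           + L * norm (integral {t..t+h} (\<lambda>s. f (x1 s) - f (x2 s)) - h *\<^sub>R (f (x1 t) - f (x2 t)))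
           + \<gamma> * integral {t..t+h} (\<lambda>s. l1norm (w1 s - w2 s))"
proof -
  define e where "e s = x1 s - x2 s" for s
  define D where "D = (\<lambda>s. f (x1 s) - f (x2 s))"
  define R where "R = integral {t..t+h} D - h *\<^sub>R D t"
  define G where "G = e (t+h) - e t - integral {t..t+h} D"
  have "continuous_on {0..t+h} D"
    unfolding D_def by (rule continuous_on_field_difference[OF sol1 sol2]) (use t h in simp)
  then have "D integrable_on {t..t+h}"
    using t by (intro integrable_continuous_real) (auto elim: continuous_on_subset)
  then have "(D has_integral integral {t..t+h} D) {t..t+h}"
    by (rule integrable_integral)
  moreover have "((\<lambda>s. f (x1 s) + B *v w1 s) has_integral (x1 (t+h) - x1 t)) {t..t+h}"
    "((\<lambda>s. f (x2 s) + B *v w2 s) has_integral (x2 (t+h) - x2 t)) {t..t+h}"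
    using t h by (intro is_solution_has_integral[OF sol1] is_solution_has_integral[OF sol2]; simp)+
  ultimately have int: "((\<lambda>s. (f (x1 s) + B *v w1 s) - (f (x2 s) + B *v w2 s) - D s) has_integral
      (x1 (t+h) - x1 t) - (x2 (t+h) - x2 t) - integral {t..t+h} D) {t..t+h}"
    by (intro has_integral_diff)
  have integrand: "(\<lambda>s. (f (x1 s) + B *v w1 s) - (f (x2 s) + B *v w2 s) - D s) = (\<lambda>s. B *v (w1 s - w2 s))"
    by (simp add: D_def fun_eq_iff matrix_vector_mult_diff_distrib)
  have G_eq: "(x1 (t+h) - x1 t) - (x2 (t+h) - x2 t) - integral {t..t+h} D = G"
    by (simp add: G_def e_def)
  have BG: "((\<lambda>s. B *v (w1 s - w2 s)) has_integral G) {t..t+h}"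
    using int unfolding integrand G_eq .
  have "((\<lambda>s. \<gamma> * l1norm (w1 s - w2 s)) has_integral \<gamma> * integral {t..t+h} (\<lambda>s. l1norm (w1 s - w2 s))) {t..t+h}"
    using W by (intro has_integral_mult_right integrable_integral)
  then have \<phi>G: "\<phi> G \<le> \<gamma> * integral {t..t+h} (\<lambda>s. l1norm (w1 s - w2 s))"
    using h input by (intro sublinear_has_integral_le[OF sublinear _ BG]) auto
  have split: "e (t+h) = (e t + h *\<^sub>R D t) + R + G"
    by (simp add: R_def G_def)
  have "\<phi> (e (t+h)) \<le> \<phi> (e t + h *\<^sub>R D t) + \<phi> R + \<phi> G"
    using sublinear_add_le[OF sublinear, of "e t + h *\<^sub>R D t + R" G]
      sublinear_add_le[OF sublinear, of "e t + h *\<^sub>R D t" R] unfolding split by linarith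
  moreover have "\<phi> (e t + h *\<^sub>R D t) \<le> \<phi> (e t) - h * l1norm (C *v e t)"
    unfolding e_def D_def by (rule decrease[OF h])
  ultimately show ?thesis
    using le_norm[of R] \<phi>G by (simp add: e_def D_def R_def)
qed

definition dissipation ::
  "(real \<Rightarrow> real ^ 'n) \<Rightarrow> (real \<Rightarrow> real ^ 'n) \<Rightarrow> (real \<Rightarrow> real ^ 'w) \<Rightarrow> (real \<Rightarrow> real ^ 'w) \<Rightarrow> real \<Rightarrow> real"
  where "dissipation x1 x2 w1 w2 t = \<phi> (x1 t - x2 t) + integral {0..t} (\<lambda>s. l1norm (C *v x1 s - C *v x2 s))
    - \<gamma> * integral {0..t} (\<lambda>s. l1norm (w1 s - w2 s))"

lemma continuous_on_dissipation:
  fixes x1 x2 :: "real \<Rightarrow> real ^ 'n" and w1 w2 :: "real \<Rightarrow> real ^ 'w"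
  assumes sol1: "is_solution f B w1 x1" and sol2: "is_solution f B w2 x2" and T: "0 \<le> T"
    and W_int: "(\<lambda>t. l1norm (w1 t - w2 t)) integrable_on {0..T}"
  shows "continuous_on {0..T} (dissipation x1 x2 w1 w2)"
proof -
  have "continuous_on {0..T} (\<lambda>t. x1 t - x2 t)"
    using is_solution_continuous_on[OF sol1 T] is_solution_continuous_on[OF sol2 T]
    by (rule continuous_on_diff)
  then have "continuous_on {0..T} (\<lambda>t. \<phi> (x1 t - x2 t))"
    using continuous_on_compose2[OF continuous_on_sublinear[OF sublinear]] by blast
  moreover have "continuous_on {0..T} (\<lambda>t. integral {0..t} (\<lambda>s. l1norm (C *v x1 s - C *v x2 s)))"
    by (intro indefinite_integral_continuous_1 integrable_continuous_real
        is_solution_output_continuous_on[OF sol1 sol2 T])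
  moreover have "continuous_on {0..T} (\<lambda>t. integral {0..t} (\<lambda>s. l1norm (w1 s - w2 s)))"
    by (rule indefinite_integral_continuous_1[OF W_int])
  ultimately show ?thesis
    unfolding dissipation_def[abs_def] by (intro continuous_on_add continuous_on_diff continuous_on_mult_left)
qed

lemma dissipation_right_increment:
  fixes x1 x2 :: "real \<Rightarrow> real ^ 'n" and w1 w2 :: "real \<Rightarrow> real ^ 'w"
  assumes sol1: "is_solution f B w1 x1" and sol2: "is_solution f B w2 x2"
    and t: "0 \<le> t" "t < T" and \<epsilon>: "0 < \<epsilon>"
    and W_int: "(\<lambda>t. l1norm (w1 t - w2 t)) integrable_on {0..T}"
  shows "\<forall>\<^sub>F h in at_right 0. dissipation x1 x2 w1 w2 (t + h) - dissipation x1 x2 w1 w2 t \<le> \<epsilon> * h"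
proof -
  define D where "D = (\<lambda>s. f (x1 s) - f (x2 s))"
  define Z where "Z = (\<lambda>s. l1norm (C *v x1 s - C *v x2 s))"
  define W where "W = (\<lambda>s. l1norm (w1 s - w2 s))"
  define \<epsilon>' where "\<epsilon>' = \<epsilon> / (2 * (L + 1))"
  have \<epsilon>': "0 < \<epsilon>'" "L * \<epsilon>' \<le> \<epsilon> / 2"
    using \<epsilon> L_nonneg by (auto simp: \<epsilon>'_def field_simps)
  have T: "0 \<le> T"
    using t by simp
  have cD: "continuous_on {0..T} D"
    unfolding D_def by (rule continuous_on_field_difference[OF sol1 sol2 T])
  have cZ: "continuous_on {0..T} Z"
    unfolding Z_def by (rule is_solution_output_continuous_on[OF sol1 sol2 T])
  have "\<forall>\<^sub>F h in at_right 0. norm (integral {t..t+h} D - h *\<^sub>R D t) \<le> \<epsilon>' * h"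
    using t \<epsilon>' by (intro eventually_norm_integral_increment_le[OF continuous_on_subset[OF cD]]) auto
  moreover have "\<forall>\<^sub>F h in at_right 0. norm (integral {t..t+h} Z - h *\<^sub>R Z t) \<le> \<epsilon> / 2 * h"
    using t \<epsilon> by (intro eventually_norm_integral_increment_le[OF continuous_on_subset[OF cZ]]) auto
  moreover have "\<forall>\<^sub>F h in at_right 0. h \<le> h0 \<and> t + h \<le> T"
    unfolding eventually_at_right_field using h0 t by (intro exI[of _ "min h0 (T - t)"]) auto
  moreover have "\<forall>\<^sub>F h in at_right (0::real). 0 < h"
    by (rule eventually_at_right_less)
  ultimately show ?thesis
  proof eventually_elim
    case (elim h)
    then have h: "0 < h" "h \<le> h0" "t + h \<le> T"
      by auto
    have intZ: "Z integrable_on {0..t+h}"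
      using h by (intro integrable_continuous_real continuous_on_subset[OF cZ]) auto
    have intW: "W integrable_on {0..t+h}"
      unfolding W_def by (rule integrable_subinterval_real[OF W_int]) (use h in auto)
    then have "W integrable_on {t..t+h}"
      by (rule integrable_subinterval_real) (use t in auto)
    then have step: "\<phi> (x1 (t+h) - x2 (t+h)) \<le> \<phi> (x1 t - x2 t) - h * Z t
        + L * norm (integral {t..t+h} D - h *\<^sub>R D t) + \<gamma> * integral {t..t+h} W"
      using storage_step[OF sol1 sol2 t(1) h(1,2)]
      by (simp add: D_def Z_def W_def matrix_vector_mult_diff_distrib)
    have "L * norm (integral {t..t+h} D - h *\<^sub>R D t) \<le> L * (\<epsilon>' * h)"
      using elim(1) L_nonneg by (rule mult_left_mono)
    also have "\<dots> \<le> \<epsilon> / 2 * h"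
      using \<epsilon>'(2) h(1) by (simp add: mult.assoc[symmetric] mult_right_mono)
    finally have R: "L * norm (integral {t..t+h} D - h *\<^sub>R D t) \<le> \<epsilon> / 2 * h" .
    have Zt: "integral {t..t+h} Z \<le> h * Z t + \<epsilon> / 2 * h"
      using abs_le_D1[OF elim(2)[unfolded real_norm_def real_scaleR_def]] by simp
    have "integral {0..t+h} Z = integral {0..t} Z + integral {t..t+h} Z"
      using Henstock_Kurzweil_Integration.integral_combine[where c = t, OF _ _ intZ] t h by simp
    moreover have "integral {0..t+h} W = integral {0..t} W + integral {t..t+h} W"
      using Henstock_Kurzweil_Integration.integral_combine[where c = t, OF _ _ intW] t h by simp
    ultimately have "dissipation x1 x2 w1 w2 (t + h) - dissipation x1 x2 w1 w2 t
        = \<phi> (x1 (t+h) - x2 (t+h)) - \<phi> (x1 t - x2 t) + integral {t..t+h} Z - \<gamma> * integral {t..t+h} W"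
      by (simp add: dissipation_def Z_def W_def algebra_simps)
    then show ?case
      using step R Zt by linarith
  qed
qed

lemma output_integral_le:
  fixes x1 x2 :: "real \<Rightarrow> real ^ 'n" and w1 w2 :: "real \<Rightarrow> real ^ 'w"
  assumes sol1: "is_solution f B w1 x1" and sol2: "is_solution f B w2 x2" and T: "0 \<le> T"
    and W_int: "(\<lambda>t. l1norm (w1 t - w2 t)) integrable_on {0..T}"
  shows "integral {0..T} (\<lambda>t. l1norm (C *v x1 t - C *v x2 t))
           \<le> \<gamma> * integral {0..T} (\<lambda>t. l1norm (w1 t - w2 t))"
proof -
  have "dissipation x1 x2 w1 w2 T \<le> dissipation x1 x2 w1 w2 0"
    using continuous_on_dissipation[OF sol1 sol2 T W_int] dissipation_right_increment[OF sol1 sol2 _ _ _ W_int]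
    by (rule Dini_right_upper_nonpos_imp_le[OF T])
  also have "dissipation x1 x2 w1 w2 0 = 0"
    using sol1 sol2 by (simp add: dissipation_def phi_0 is_solution_def)
  finally show ?thesis
    using nonneg[of "x1 T - x2 T"] by (simp add: dissipation_def)
qed

lemma output_integral_atLeast_le:
  fixes x1 x2 :: "real \<Rightarrow> real ^ 'n" and w1 w2 :: "real \<Rightarrow> real ^ 'w"
  assumes sol1: "is_solution f B w1 x1" and sol2: "is_solution f B w2 x2"
    and W_int: "(\<lambda>t. l1norm (w1 t - w2 t)) integrable_on {0..}"
  shows "(\<lambda>t. l1norm (C *v x1 t - C *v x2 t)) integrable_on {0..} \<and>
         integral {0..} (\<lambda>t. l1norm (C *v x1 t - C *v x2 t))
           \<le> \<gamma> * integral {0..} (\<lambda>t. l1norm (w1 t - w2 t))"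
proof (rule nonneg_bounded_integral_atLeast)
  show "(\<lambda>t. l1norm (C *v x1 t - C *v x2 t)) integrable_on {0..y}" for y
  proof (cases "0 \<le> y")
    case True
    then show ?thesis
      by (intro integrable_continuous_real is_solution_output_continuous_on[OF sol1 sol2])
  qed (simp add: integrable_on_empty)
  show "0 \<le> l1norm (C *v x1 t - C *v x2 t)" for t
    by (simp add: l1norm_def sum_nonneg)
  fix y :: real assume y: "0 \<le> y"
  have W_y: "(\<lambda>t. l1norm (w1 t - w2 t)) integrable_on {0..y}"
    by (rule integrable_on_subinterval[OF W_int]) auto
  have "integral {0..y} (\<lambda>t. l1norm (C *v x1 t - C *v x2 t))
      \<le> \<gamma> * integral {0..y} (\<lambda>t. l1norm (w1 t - w2 t))"
    by (rule output_integral_le[OF sol1 sol2 y W_y])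
  also have "\<dots> \<le> \<gamma> * integral {0..} (\<lambda>t. l1norm (w1 t - w2 t))"
    using W_y W_int gamma_nonneg
    by (intro mult_left_mono integral_subset_le) (auto simp: l1norm_def sum_nonneg)
  finally show "integral {0..y} (\<lambda>t. l1norm (C *v x1 t - C *v x2 t))
      \<le> \<gamma> * integral {0..} (\<lambda>t. l1norm (w1 t - w2 t))" .
qed

end

lemma incremental_storage_poly_gauge:
  fixes f :: "real ^ 'n \<Rightarrow> real ^ 'n" and B :: "real ^ 'w ^ 'n" and C :: "real ^ 'n ^ 'z"
    and A :: "'k::finite \<Rightarrow> real ^ 'n ^ 'n" and V :: "real ^ 'm ^ 'n" and P :: "real ^ ('w + 'w) ^ 'm"
    and M :: "'k \<Rightarrow> real ^ 'm ^ 'm"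
  assumes f_deriv: "\<And>x. (f has_derivative (\<lambda>h. Jf x *v h)) (at x)"
    and Jf_conv: "\<And>x. Jf x \<in> convex hull (range A)"
    and P_nonneg: "\<And>i j. 0 \<le> P $ i $ j"
    and BP: "blockBmB B = V ** P"
    and P_colsum: "\<And>j. eta_w = (\<Sum>i\<in>UNIV. P $ i $ j)"
    and eta_z_pos: "eta_z > 0"
    and M_metzler: "\<And>l i j. i \<noteq> j \<Longrightarrow> 0 \<le> M l $ i $ j"
    and AV: "\<And>l. A l ** V = V ** M l"
    and M_colsum: "\<And>l j. - eta_z * l1norm (C *v column j V) = (\<Sum>i\<in>UNIV. M l $ i $ j)"
    and V_interior: "0 \<in> interior (convex hull (range (\<lambda>j. column j V)))"
  obtains L h0 where "incremental_storage (\<lambda>x. poly_gauge V x / eta_z) f B C (eta_w / eta_z) L h0"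
proof -
  obtain L where L: "\<And>y. \<exists>p\<in>cone_coeffs V y. (\<Sum>i\<in>UNIV. p $ i) \<le> L * norm y"
    using cone_coeffs_norm_bound[OF V_interior] by blast
  have spans: "cone_coeffs V x \<noteq> {}" for x
    using L[of x] by auto
  obtain h0 where h0: "0 < h0" "\<And>h li. 0 \<le> h \<Longrightarrow> h \<le> h0 \<Longrightarrow> 0 \<le> 1 + h * (case li of (l, i) \<Rightarrow> M l $ i $ i)"
    using exists_one_plus_mult_nonneg[where c = "\<lambda>li. case li of (l, i) \<Rightarrow> M l $ i $ i"] by blast
  have diag: "0 \<le> 1 + h * M l $ i $ i" if "0 \<le> h" "h \<le> h0" for h l i
    using h0(2)[OF that, of "(l, i)"] by simp
  show thesis
  proof (rule that, unfold_locales)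
    show "sublinear (\<lambda>x. poly_gauge V x / eta_z)"
      by (rule sublinear_divide[OF sublinear_poly_gauge[OF spans] eta_z_pos])
    show "0 \<le> poly_gauge V x / eta_z" for x
      by (intro divide_nonneg_pos poly_gauge_nonneg spans eta_z_pos)
    show "poly_gauge V x / eta_z \<le> L / eta_z * norm x" for x
    proof -
      obtain p where "p \<in> cone_coeffs V x" "(\<Sum>i\<in>UNIV. p $ i) \<le> L * norm x"
        using L[of x] by blast
      then have "poly_gauge V x \<le> L * norm x"
        using poly_gauge_le order_trans by blast
      then show ?thesis
        using eta_z_pos divide_right_mono by fastforce
    qed
    show "0 < h0"
      by (rule h0(1))
    show "poly_gauge V (x1 - x2 + h *\<^sub>R (f x1 - f x2)) / eta_z
        \<le> poly_gauge V (x1 - x2) / eta_z - h * l1norm (C *v (x1 - x2))" if h: "0 < h" "h \<le> h0" for x1 x2 h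
    proof -
      have "poly_gauge V (x1 - x2 + h *\<^sub>R (f x1 - f x2))
          \<le> poly_gauge V (x1 - x2) - h * eta_z * l1norm (C *v (x1 - x2))"
        using h eta_z_pos
        by (intro poly_gauge_incremental_decrease[OF spans f_deriv Jf_conv M_metzler AV M_colsum] diag) auto
      then have "poly_gauge V (x1 - x2 + h *\<^sub>R (f x1 - f x2)) / eta_z
          \<le> (poly_gauge V (x1 - x2) - h * eta_z * l1norm (C *v (x1 - x2))) / eta_z"
        using eta_z_pos by (intro divide_right_mono) auto
      also have "\<dots> = poly_gauge V (x1 - x2) / eta_z - h * l1norm (C *v (x1 - x2))"
        using eta_z_pos by (simp add: diff_divide_distrib)
      finally show ?thesis .
    qed
    show "poly_gauge V (B *v w) / eta_z \<le> eta_w / eta_z * l1norm w" for w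
      using divide_right_mono[OF poly_gauge_mult_le[OF P_nonneg BP P_colsum] less_imp_le[OF eta_z_pos]]
      by simp
    show "continuous_on UNIV f"
      using has_derivative_continuous[OF f_deriv] by (intro continuous_at_imp_continuous_on) auto
  qed
qed

theorem theorem1:
  fixes f :: "real ^ 'n \<Rightarrow> real ^ 'n"
    and Jf :: "real ^ 'n \<Rightarrow> real ^ 'n ^ 'n"
    and B :: "real ^ 'w ^ 'n"
    and C :: "real ^ 'n ^ 'z"
    and A :: "'k::finite \<Rightarrow> real ^ 'n ^ 'n"
    and V :: "real ^ 'm ^ 'n"
    and P :: "real ^ ('w + 'w) ^ 'm"
    and M :: "'k \<Rightarrow> real ^ 'm ^ 'm"
    and eta_w eta_z :: real
  assumes f_deriv: "\<And>x. (f has_derivative (\<lambda>h. Jf x *v h)) (at x)"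
    and Jf_cont: "continuous_on UNIV Jf"
    and Jf_conv: "\<And>x. Jf x \<in> convex hull (range A)"
    and P_nonneg: "\<And>i j. 0 \<le> P $ i $ j"
    and BP: "blockBmB B = V ** P"
    and P_colsum: "\<And>j. eta_w = (\<Sum>i\<in>UNIV. P $ i $ j)"
    and eta_z_pos: "eta_z > 0"
    and M_metzler: "\<And>l i j. i \<noteq> j \<Longrightarrow> 0 \<le> M l $ i $ j"
    and AV: "\<And>l. A l ** V = V ** M l"
    and M_colsum: "\<And>l j. - eta_z * l1norm (C *v column j V) = (\<Sum>i\<in>UNIV. M l $ i $ j)"
    and V_compact: "compact (convex hull (range (\<lambda>j. column j V)))"
    and V_interior: "0 \<in> interior (convex hull (range (\<lambda>j. column j V)))"
  shows "(\<forall>x1 x2 :: real ^ 'n. \<forall>w1 w2 :: real ^ 'w.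
            Dplus (\<lambda>x. poly_gauge V x / eta_z) (x1 - x2) (f x1 - f x2 + B *v (w1 - w2))
              \<le> - l1norm (C *v (x1 - x2)) + (eta_w / eta_z) * l1norm (w1 - w2))
       \<and> (\<forall>(w1 :: real \<Rightarrow> real ^ 'w) w2 (x1 :: real \<Rightarrow> real ^ 'n) x2.
            is_solution f B w1 x1 \<and> is_solution f B w2 x2 \<and>
            (\<lambda>t. l1norm (w1 t - w2 t)) integrable_on {0..}
            \<longrightarrow> (\<lambda>t. l1norm (C *v x1 t - C *v x2 t)) integrable_on {0..} \<and>
                integral {0..} (\<lambda>t. l1norm (C *v x1 t - C *v x2 t))
                  \<le> (eta_w / eta_z) * integral {0..} (\<lambda>t. l1norm (w1 t - w2 t)))"
proof -
  obtain L h0 where "incremental_storage (\<lambda>x. poly_gauge V x / eta_z) f B C (eta_w / eta_z) L h0"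
    using incremental_storage_poly_gauge[OF f_deriv Jf_conv P_nonneg BP P_colsum eta_z_pos
        M_metzler AV M_colsum V_interior] .
  then interpret incremental_storage "\<lambda>x. poly_gauge V x / eta_z" f B C "eta_w / eta_z" L h0 .
  show ?thesis
    using Dplus_le output_integral_atLeast_le by blast
qed

end
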